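(* The monoid $\mathcal{BR}(\mathcal{B}r_n)$ is generated by $d_1,\ldots,d_{n-1}$, $e_1,\ldots,e_{n-1}$ and $z_1,\ldots,z_{n-1}$.
   Context: $\mathfrak{C}_n$ is the partition monoid: set partitions of $[2n]$ (top points $1..n$, bottom $n+1..2n$) with concatenation product $*$ (identify bottom point $n+i$ of the first with top point $i$ of the second, join blocks transitively, delete middle points). $I\preceq J$ means each block of $J$ is a union of blocks of $I$. The Brauer monoid $\mathcal{B}r_n$ is the submonoid of set partitions all of whose blocks have exactly two elements; it contains $\mathfrak{S}_n$ (blocks $\{i,n+j\}$), with simple transpositions $s_i$, identity $1=\{\{i,n+i\}\}$, and $t_i$ = the partition with blocks $\{i,i+1\}$, $\{n+i,n+i+1\}$ and $\{j,n+j\}$ for $j\ne i,i+1$. A set partition $J$ of $[2n]$ is boxed if $1\preceq J$ and $J$ restricted to $[n]$ has interval blocks. $\mathcal{BR}(\mathcal{B}r_n)$ is the monoid of pairs $(I,J)$ with $I\in\mathcal{B}r_n$, $J$ boxed, $I\preceq J$, with product $(I,J)(H,K)=(I*H,J*K)$. $b_i$ merges the blocks $\{i,n+i\}$ and $\{i+1,n+i+1\}$ of $1$; $e_i=(1,b_i)$, $z_i=(s_i,b_i)$, $d_i=(t_i,b_i)$. *)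

theory Defs
  imports "HOL-Library.Disjoint_Sets"
begin

text \<open>Set partitions of [2n] = {1..2n}: top points 1..n, bottom points n+1..2n.\<close>

definition setpart :: "nat \<Rightarrow> nat set set \<Rightarrow> bool" where
  "setpart n P \<longleftrightarrow> partition_on {1..2*n} P"

text \<open>Concatenation product. Points of the diagram stack are pairs (level, index):
  level 0 = top of the first factor, level 1 = middle, level 2 = bottom of the second.\<close>

definition mapI :: "nat \<Rightarrow> nat \<Rightarrow> nat \<times> nat" where
  "mapI n x = (if x \<le> n then (0, x) else (1, x - n))"

definition mapJ :: "nat \<Rightarrow> nat \<Rightarrow> nat \<times> nat" where
  "mapJ n x = (if x \<le> n then (1, x) else (2, x - n))"

definition stack_edges :: "nat \<Rightarrow> nat set set \<Rightarrow> nat set set \<Rightarrow> ((nat \<times> nat) \<times> (nat \<times> nat)) set" where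
  "stack_edges n I J =
     {(mapI n a, mapI n b) | a b B. B \<in> I \<and> a \<in> B \<and> b \<in> B}
   \<union> {(mapJ n a, mapJ n b) | a b B. B \<in> J \<and> a \<in> B \<and> b \<in> B}"

definition outer :: "nat \<Rightarrow> (nat \<times> nat) set" where
  "outer n = {(0, i) | i. i \<in> {1..n}} \<union> {(2, i) | i. i \<in> {1..n}}"

definition unmap :: "nat \<Rightarrow> nat \<times> nat \<Rightarrow> nat" where
  "unmap n p = (if fst p = 0 then snd p else n + snd p)"

definition pmult :: "nat \<Rightarrow> nat set set \<Rightarrow> nat set set \<Rightarrow> nat set set" where
  "pmult n I J =
     {unmap n ` {y \<in> outer n. (x, y) \<in> (stack_edges n I J)\<^sup>*} | x. x \<in> outer n}"

definition prefines :: "nat set set \<Rightarrow> nat set set \<Rightarrow> bool" where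
  "prefines I J \<longleftrightarrow> (\<forall>B\<in>J. \<exists>S\<subseteq>I. B = \<Union>S)"

definition brauer :: "nat \<Rightarrow> nat set set \<Rightarrow> bool" where
  "brauer n I \<longleftrightarrow> setpart n I \<and> (\<forall>B\<in>I. card B = 2)"

definition idp :: "nat \<Rightarrow> nat set set" where
  "idp n = {{j, n + j} | j. j \<in> {1..n}}"

definition idrest :: "nat \<Rightarrow> nat \<Rightarrow> nat set set" where
  "idrest n i = {{j, n + j} | j. j \<in> {1..n} \<and> j \<noteq> i \<and> j \<noteq> i + 1}"

definition sgen :: "nat \<Rightarrow> nat \<Rightarrow> nat set set" where
  "sgen n i = idrest n i \<union> {{i, n + (i + 1)}, {i + 1, n + i}}"

definition tgen :: "nat \<Rightarrow> nat \<Rightarrow> nat set set" where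
  "tgen n i = idrest n i \<union> {{i, i + 1}, {n + i, n + (i + 1)}}"

definition bgen :: "nat \<Rightarrow> nat \<Rightarrow> nat set set" where
  "bgen n i = idrest n i \<union> {{i, i + 1, n + i, n + (i + 1)}}"

definition boxed :: "nat \<Rightarrow> nat set set \<Rightarrow> bool" where
  "boxed n J \<longleftrightarrow> setpart n J \<and> prefines (idp n) J
     \<and> (\<forall>B\<in>J. \<exists>a b. B \<inter> {1..n} = {a..b})"

definition BR :: "nat \<Rightarrow> (nat set set \<times> nat set set) set" where
  "BR n = {(I, J). brauer n I \<and> boxed n J \<and> prefines I J}"

definition brmult :: "nat \<Rightarrow> nat set set \<times> nat set set \<Rightarrow> nat set set \<times> nat set set
    \<Rightarrow> nat set set \<times> nat set set" where
  "brmult n x y = (pmult n (fst x) (fst y), pmult n (snd x) (snd y))"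

definition egen :: "nat \<Rightarrow> nat \<Rightarrow> nat set set \<times> nat set set" where
  "egen n i = (idp n, bgen n i)"
definition zgen :: "nat \<Rightarrow> nat \<Rightarrow> nat set set \<times> nat set set" where
  "zgen n i = (sgen n i, bgen n i)"
definition dgen :: "nat \<Rightarrow> nat \<Rightarrow> nat set set \<times> nat set set" where
  "dgen n i = (tgen n i, bgen n i)"

inductive_set gen_monoid :: "nat \<Rightarrow> (nat set set \<times> nat set set) set
    \<Rightarrow> (nat set set \<times> nat set set) set" for n G where
  unit: "(idp n, idp n) \<in> gen_monoid n G"
| step: "x \<in> gen_monoid n G \<Longrightarrow> g \<in> G \<Longrightarrow> brmult n x g \<in> gen_monoid n G"

definition BR_gens :: "nat \<Rightarrow> (nat set set \<times> nat set set) set" where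
  "BR_gens n = {dgen n i | i. 1 \<le> i \<and> i \<le> n - 1}
             \<union> {egen n i | i. 1 \<le> i \<and> i \<le> n - 1}
             \<union> {zgen n i | i. 1 \<le> i \<and> i \<le> n - 1}"

end

theory Submission
  imports Defs
begin

text \<open>Brauer elements are the pairings of fixed-point-free involutions \<open>p\<close> of \<open>{1..2n}\<close>,
  boxed elements are determined by the set \<open>S\<close> of those \<open>k\<close> whose columns \<open>k\<close> and \<open>k + 1\<close>
  lie in one block, and \<open>(I, J)\<close> belongs to \<open>BR n\<close> iff every pair of \<open>p\<close> lies in one block.
  Labelling the stacked diagram shows that right multiplication by \<open>e\<^sub>i\<close>, \<open>z\<^sub>i\<close> and \<open>d\<^sub>i\<close> adds
  \<open>i\<close> to \<open>S\<close> and keeps \<open>p\<close>, conjugates \<open>p\<close> by the transposition of the bottom points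
  \<open>n + i\<close> and \<open>n + i + 1\<close>, or makes these two points partners and pairs their former partners,
  respectively. Hence the generated monoid lies in \<open>BR n\<close>.

  Conversely, products of the \<open>e\<^sub>i\<close> give every \<open>(1, J)\<close>, and every \<open>p\<close> compatible with \<open>S\<close> is
  reached by induction on the number of pairs of bottom points. Without such pairs \<open>p\<close> permutes
  the columns within each block, and multiplying by \<open>z\<^sub>k\<close> at a descent \<open>k \<in> S\<close> decreases the
  displacement \<open>\<Sum>\<^sub>j (p (n + j) - j)\<^sup>2\<close>. A pair \<open>{n + c, n + e}\<close> of bottom points is moved by
  \<open>z\<close>'s until \<open>e = c + 1\<close>; as both rows of a block have the same size, its block then contains a
  pair \<open>{a, p a}\<close> of top points, and \<open>p\<close> is obtained by \<open>d\<^sub>c\<close> from the pairing with the pairs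
  \<open>{a, n + c}\<close> and \<open>{p a, n + c + 1}\<close>, which has fewer pairs of bottom points.\<close>

section \<open>Products via labellings of the stacked diagram\<close>

lemma sym_stack_edges: "sym (stack_edges n I K)"
  unfolding stack_edges_def sym_def by blast

lemma stack_path_sym:
  "(u, v) \<in> (stack_edges n I K)\<^sup>* \<Longrightarrow> (v, u) \<in> (stack_edges n I K)\<^sup>*"
  by (rule symD[OF sym_rtrancl[OF sym_stack_edges]])

lemma stack_path_first:
  "B \<in> I \<Longrightarrow> a \<in> B \<Longrightarrow> b \<in> B \<Longrightarrow> (mapI n a, mapI n b) \<in> (stack_edges n I K)\<^sup>*"
  unfolding stack_edges_def by blast

lemma stack_path_second:
  "B \<in> K \<Longrightarrow> a \<in> B \<Longrightarrow> b \<in> B \<Longrightarrow> (mapJ n a, mapJ n b) \<in> (stack_edges n I K)\<^sup>*"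
  unfolding stack_edges_def by blast

lemma stack_path_quotient:
  assumes R: "equiv {1..2*n} R" and xy: "(x, y) \<in> R"
  shows "(mapI n x, mapI n y) \<in> (stack_edges n ({1..2*n} // R) K)\<^sup>*"
proof (rule stack_path_first)
  have x: "x \<in> {1..2*n}"
    using equiv_type[OF R] xy by blast
  then show "R `` {x} \<in> {1..2*n} // R"
    by (rule quotientI)
  show "x \<in> R `` {x}" "y \<in> R `` {x}"
    using equiv_class_self[OF R x] xy by auto
qed

lemma stack_path_label_eq:
  assumes "\<And>B a b. B \<in> I \<Longrightarrow> a \<in> B \<Longrightarrow> b \<in> B \<Longrightarrow> lab (mapI n a) = lab (mapI n b)"
    and "\<And>B a b. B \<in> K \<Longrightarrow> a \<in> B \<Longrightarrow> b \<in> B \<Longrightarrow> lab (mapJ n a) = lab (mapJ n b)"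
    and "(x, y) \<in> (stack_edges n I K)\<^sup>*"
  shows "lab x = lab y"
  using assms(3) by induction (auto simp: stack_edges_def dest: assms(1,2))

definition outer_point :: "nat \<Rightarrow> nat \<Rightarrow> nat \<times> nat" where
  "outer_point n u = (if u \<le> n then (0, u) else (2, u - n))"

lemma unmap_outer_point [simp]: "unmap n (outer_point n u) = u"
  unfolding unmap_def outer_point_def by auto

lemma outer_point_unmap: "x \<in> outer n \<Longrightarrow> outer_point n (unmap n x) = x"
  unfolding outer_def unmap_def outer_point_def by auto

lemma outer_eq_image_outer_point: "outer n = outer_point n ` {1..2*n}"
proof (intro equalityI subsetI)
  fix x assume x: "x \<in> outer n"
  then have "unmap n x \<in> {1..2*n}"
    unfolding outer_def unmap_def by auto
  then show "x \<in> outer_point n ` {1..2*n}"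
    using outer_point_unmap[OF x] by force
qed (auto simp: outer_def outer_point_def)

lemma mapI_top [simp]: "x \<le> n \<Longrightarrow> mapI n x = (0, x)"
  unfolding mapI_def by simp

lemma mapI_bottom [simp]: "n < x \<Longrightarrow> mapI n x = (1, x - n)"
  unfolding mapI_def by simp

lemma mapJ_top [simp]: "x \<le> n \<Longrightarrow> mapJ n x = (1, x)"
  unfolding mapJ_def by simp

lemma mapJ_bottom [simp]: "n < x \<Longrightarrow> mapJ n x = (2, x - n)"
  unfolding mapJ_def by simp

lemma outer_point_top [simp]: "u \<le> n \<Longrightarrow> outer_point n u = (0, u)"
  unfolding outer_point_def by simp

lemma outer_point_bottom [simp]: "n < u \<Longrightarrow> outer_point n u = (2, u - n)"
  unfolding outer_point_def by simp

lemma unmap_simps [simp]: "unmap n (0, j) = j" "unmap n (Suc 0, j) = n + j" "unmap n (2, j) = n + j"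
  unfolding unmap_def by simp_all

lemma unmap_mapI [simp]: "unmap n (mapI n x) = x"
  unfolding unmap_def mapI_def by simp

text \<open>The label is an invariant of the connected components of the stacked diagram, and on the
  outer points it identifies these components with the classes of \<open>R\<close>.\<close>

lemma pmult_eq_quotient:
  assumes R: "equiv {1..2*n} R"
    and first: "\<And>B a b. B \<in> I \<Longrightarrow> a \<in> B \<Longrightarrow> b \<in> B \<Longrightarrow> lab (mapI n a) = lab (mapI n b)"
    and second: "\<And>B a b. B \<in> K \<Longrightarrow> a \<in> B \<Longrightarrow> b \<in> B \<Longrightarrow> lab (mapJ n a) = lab (mapJ n b)"
    and outer_label: "\<And>u. u \<in> {1..2*n} \<Longrightarrow> lab (outer_point n u) = R `` {u}"
    and connected: "\<And>u v. (u, v) \<in> R \<Longrightarrow> (outer_point n u, outer_point n v) \<in> (stack_edges n I K)\<^sup>*"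
  shows "pmult n I K = {1..2*n} // R"
proof -
  let ?E = "stack_edges n I K"
  have component: "unmap n ` {y \<in> outer n. (outer_point n u, y) \<in> ?E\<^sup>*} = R `` {u}"
    if u: "u \<in> {1..2*n}" for u
  proof -
    have "(outer_point n u, outer_point n v) \<in> ?E\<^sup>* \<longleftrightarrow> (u, v) \<in> R" if v: "v \<in> {1..2*n}" for v
    proof
      assume path: "(outer_point n u, outer_point n v) \<in> ?E\<^sup>*"
      have "lab (outer_point n u) = lab (outer_point n v)"
        using first second path by (rule stack_path_label_eq)
      then show "(u, v) \<in> R"
        using outer_label u v eq_equiv_class_iff[OF R u v] by simp
    qed (rule connected)
    then have "{v \<in> {1..2*n}. (outer_point n u, outer_point n v) \<in> ?E\<^sup>*} = R `` {u}"
      using equiv_type[OF R] by blast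
    moreover have "{y \<in> outer n. (outer_point n u, y) \<in> ?E\<^sup>*}
        = outer_point n ` {v \<in> {1..2*n}. (outer_point n u, outer_point n v) \<in> ?E\<^sup>*}"
      unfolding outer_eq_image_outer_point by auto
    ultimately show ?thesis
      by (simp add: image_image)
  qed
  have "pmult n I K = (\<lambda>u. unmap n ` {y \<in> outer n. (outer_point n u, y) \<in> ?E\<^sup>*}) ` {1..2*n}"
    unfolding pmult_def outer_eq_image_outer_point by blast
  also have "\<dots> = {1..2*n} // R"
    unfolding quotient_def using component by auto
  finally show ?thesis .
qed

section \<open>Brauer and boxed partitions as equivalence relations\<close>

lemma prefines_quotient_iff:
  assumes R1: "equiv A R1" and R2: "equiv A R2"
  shows "prefines (A // R1) (A // R2) \<longleftrightarrow> R1 \<subseteq> R2"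
proof
  assume sub: "R1 \<subseteq> R2"
  have "\<exists>S\<subseteq>A // R1. B = \<Union>S" if B: "B \<in> A // R2" for B
  proof (intro exI conjI)
    have BA: "B \<subseteq> A"
      using in_quotient_imp_subset[OF R2 B] .
    then show "(\<lambda>y. R1 `` {y}) ` B \<subseteq> A // R1"
      by (auto intro: quotientI)
    have "R1 `` {y} \<subseteq> B" if "y \<in> B" for y
      using in_quotient_imp_closed[OF R2 B that] sub by blast
    moreover have "y \<in> R1 `` {y}" if "y \<in> B" for y
      using equiv_class_self[OF R1] BA that by blast
    ultimately show "B = \<Union>((\<lambda>y. R1 `` {y}) ` B)"
      by blast
  qed
  then show "prefines (A // R1) (A // R2)"
    unfolding prefines_def by blast
next
  assume P: "prefines (A // R1) (A // R2)"
  show "R1 \<subseteq> R2"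
  proof safe
    fix x y assume xy: "(x, y) \<in> R1"
    then have x: "x \<in> A"
      using equiv_type[OF R1] by blast
    obtain S where S: "S \<subseteq> A // R1" "R2 `` {x} = \<Union>S"
      using P[unfolded prefines_def, rule_format, OF quotientI[OF x]] by blast
    then obtain C where C: "C \<in> S" "x \<in> C"
      using equiv_class_self[OF R2 x] by auto
    then have "y \<in> C"
      using in_quotient_imp_closed[OF R1 _ C(2) xy] S(1) by blast
    then show "(x, y) \<in> R2"
      using C(1) S(2) by blast
  qed
qed

abbreviation blocks :: "nat \<Rightarrow> (nat \<times> nat) set \<Rightarrow> nat set set" where
  "blocks n R \<equiv> {1..2*n} // R"

text \<open>A Brauer element is the set of pairs \<open>{x, p x}\<close> of a fixed-point-free involution \<open>p\<close>
  of \<open>{1..2n}\<close>; only the values of \<open>p\<close> on \<open>{1..2n}\<close> matter.\<close>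

definition fpf_involution :: "nat \<Rightarrow> (nat \<Rightarrow> nat) \<Rightarrow> bool" where
  "fpf_involution n p \<longleftrightarrow> (\<forall>x\<in>{1..2*n}. p x \<in> {1..2*n} \<and> p x \<noteq> x \<and> p (p x) = x)"

definition pair_rel :: "nat \<Rightarrow> (nat \<Rightarrow> nat) \<Rightarrow> (nat \<times> nat) set" where
  "pair_rel n p = {(x, y). x \<in> {1..2*n} \<and> y \<in> {1..2*n} \<and> (y = x \<or> y = p x)}"

lemma fpf_involutionD:
  assumes "fpf_involution n p" "x \<in> {1..2*n}"
  shows "p x \<in> {1..2*n}" "p x \<noteq> x" "p (p x) = x"
  using assms unfolding fpf_involution_def by auto

lemma fpf_involution_inj:
  "fpf_involution n p \<Longrightarrow> x \<in> {1..2*n} \<Longrightarrow> y \<in> {1..2*n} \<Longrightarrow> p x = p y \<Longrightarrow> x = y"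
  by (metis fpf_involutionD(3))

lemma equiv_pair_rel: "fpf_involution n p \<Longrightarrow> equiv {1..2*n} (pair_rel n p)"
  unfolding fpf_involution_def pair_rel_def equiv_def refl_on_def sym_def trans_def by auto

lemma pair_rel_class: "fpf_involution n p \<Longrightarrow> x \<in> {1..2*n} \<Longrightarrow> pair_rel n p `` {x} = {x, p x}"
  unfolding fpf_involution_def pair_rel_def by auto

lemma blocks_pair_rel:
  "fpf_involution n p \<Longrightarrow> blocks n (pair_rel n p) = (\<lambda>x. {x, p x}) ` {1..2*n}"
  unfolding quotient_def using pair_rel_class by auto

lemma pair_rel_cong: "(\<And>x. x \<in> {1..2*n} \<Longrightarrow> p x = q x) \<Longrightarrow> pair_rel n p = pair_rel n q"
  unfolding pair_rel_def by auto

lemma card_2_other: "card A = 2 \<Longrightarrow> x \<in> A \<Longrightarrow> \<exists>y. y \<noteq> x \<and> A = {x, y}"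
  by (auto simp: card_2_iff insert_commute)

lemma equiv_doubleton_classes:
  assumes R: "equiv {1..2*n} R" and two: "\<And>x. x \<in> {1..2*n} \<Longrightarrow> card (R `` {x}) = 2"
  obtains p where "fpf_involution n p" "R = pair_rel n p"
proof -
  define p where "p x = (SOME y. y \<noteq> x \<and> R `` {x} = {x, y})" for x
  have partner: "p x \<noteq> x \<and> R `` {x} = {x, p x}" if x: "x \<in> {1..2*n}" for x
  proof -
    have "\<exists>y. y \<noteq> x \<and> R `` {x} = {x, y}"
      using card_2_other[OF two[OF x] equiv_class_self[OF R x]] .
    then show ?thesis
      unfolding p_def by (rule someI_ex)
  qed
  have p: "fpf_involution n p"
    unfolding fpf_involution_def
  proof
    fix x assume x: "x \<in> {1..2*n}"
    have px: "(x, p x) \<in> R"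
      using partner[OF x] by blast
    then have "p x \<in> {1..2*n}"
      using equiv_type[OF R] by blast
    moreover have "R `` {p x} = R `` {x}"
      using equiv_class_eq[OF R px] by simp
    ultimately show "p x \<in> {1..2*n} \<and> p x \<noteq> x \<and> p (p x) = x"
      using partner x by (metis doubleton_eq_iff)
  qed
  have "(x, y) \<in> R \<longleftrightarrow> (x, y) \<in> pair_rel n p" for x y
  proof (cases "x \<in> {1..2*n}")
    case True
    then have "(x, y) \<in> R \<longleftrightarrow> y = x \<or> y = p x"
      using partner[OF True] by blast
    then show ?thesis
      using True fpf_involutionD(1)[OF p True] unfolding pair_rel_def by auto
  next
    case False
    then show ?thesis
      using equiv_type[OF R] unfolding pair_rel_def by blast
  qed
  then have "R = pair_rel n p"
    by (simp add: set_eq_iff split_paired_All)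
  with p show ?thesis
    by (rule that)
qed

lemma brauer_iff: "brauer n I \<longleftrightarrow> (\<exists>p. fpf_involution n p \<and> I = blocks n (pair_rel n p))"
proof
  assume "\<exists>p. fpf_involution n p \<and> I = blocks n (pair_rel n p)"
  then obtain p where p: "fpf_involution n p" and I: "I = blocks n (pair_rel n p)"
    by blast
  have "setpart n I"
    unfolding setpart_def I by (rule partition_on_quotient[OF equiv_pair_rel[OF p]])
  moreover have "card B = 2" if B: "B \<in> I" for B
  proof -
    obtain x where x: "x \<in> {1..2*n}" and "B = {x, p x}"
      using B unfolding I blocks_pair_rel[OF p] by blast
    then show ?thesis
      using fpf_involutionD(2)[OF p x] by simp
  qed
  ultimately show "brauer n I"
    unfolding brauer_def by blast
next
  assume brauer: "brauer n I"
  then obtain R where R: "equiv {1..2*n} R" and I: "I = blocks n R"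
    unfolding brauer_def setpart_def partition_on_alt by blast
  have "card (R `` {x}) = 2" if "x \<in> {1..2*n}" for x
    using brauer quotientI[OF that] unfolding brauer_def I by blast
  then obtain p where "fpf_involution n p" "R = pair_rel n p"
    using equiv_doubleton_classes[OF R] by blast
  then show "\<exists>p. fpf_involution n p \<and> I = blocks n (pair_rel n p)"
    using I by blast
qed

definition id_pairing :: "nat \<Rightarrow> nat \<Rightarrow> nat" where
  "id_pairing n x = (if x \<le> n then n + x else x - n)"

lemma fpf_involution_id_pairing: "fpf_involution n (id_pairing n)"
  unfolding fpf_involution_def id_pairing_def by auto

lemma idp_eq_image: "idp n = (\<lambda>j. {j, n + j}) ` {1..n}"
  unfolding idp_def by blast

lemma idp_eq_blocks_id_pairing: "idp n = blocks n (pair_rel n (id_pairing n))"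
proof -
  have "{x, id_pairing n x} \<in> idp n" if x: "x \<in> {1..2*n}" for x
  proof (cases "x \<le> n")
    case True
    then show ?thesis
      using x unfolding idp_def id_pairing_def by auto
  next
    case False
    then have "{x, id_pairing n x} = {x - n, n + (x - n)}"
      unfolding id_pairing_def by auto
    then show ?thesis
      using False x unfolding idp_def by auto
  qed
  moreover have "{j, n + j} = {j, id_pairing n j}" "j \<in> {1..2*n}" if "j \<in> {1..n}" for j
    using that unfolding id_pairing_def by auto
  ultimately show ?thesis
    unfolding blocks_pair_rel[OF fpf_involution_id_pairing] idp_def by blast
qed

text \<open>A boxed element is determined by the set \<open>S\<close> of those \<open>k\<close> for which the columns \<open>k\<close>
  and \<open>k + 1\<close> lie in a common block; the column of a point is its position on its row.\<close>

definition column :: "nat \<Rightarrow> nat \<Rightarrow> nat" where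
  "column n x = (if x \<le> n then x else x - n)"

definition box_rel :: "nat \<Rightarrow> nat set \<Rightarrow> (nat \<times> nat) set" where
  "box_rel n S = {(x, y). x \<in> {1..2*n} \<and> y \<in> {1..2*n} \<and>
     {min (column n x) (column n y)..<max (column n x) (column n y)} \<subseteq> S}"

lemma column_range: "x \<in> {1..2*n} \<Longrightarrow> column n x \<in> {1..n}"
  unfolding column_def by auto

lemma column_top [simp]: "x \<le> n \<Longrightarrow> column n x = x"
  unfolding column_def by auto

lemma column_bottom [simp]: "column n (n + j) = (if j = 0 then n else j)"
  unfolding column_def by auto

lemma interval_between_subset:
  "{min a c..<max a c} \<subseteq> {min a b..<max a b} \<union> {min b c..<max b c}" for a b c :: nat
  by (auto simp: min_def max_def)

lemma equiv_box_rel: "equiv {1..2*n} (box_rel n S)"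
proof (rule equivI)
  show "trans (box_rel n S)"
    using interval_between_subset unfolding trans_def box_rel_def by blast
qed (auto simp: box_rel_def refl_on_def sym_def min.commute max.commute)

lemma trans_box_rel: "trans (box_rel n S)"
  using equiv_box_rel by (blast elim: equivE)

lemma box_rel_sym: "(x, y) \<in> box_rel n S \<Longrightarrow> (y, x) \<in> box_rel n S"
  using equiv_box_rel by (blast elim: equivE symE)

lemma box_rel_trans: "(x, y) \<in> box_rel n S \<Longrightarrow> (y, z) \<in> box_rel n S \<Longrightarrow> (x, z) \<in> box_rel n S"
  using trans_box_rel by (blast elim: transE)

lemma box_rel_refl: "x \<in> {1..2*n} \<Longrightarrow> (x, x) \<in> box_rel n S"
  using equiv_box_rel by (blast elim: equivE dest: refl_onD)

lemma box_rel_mono: "S \<subseteq> T \<Longrightarrow> box_rel n S \<subseteq> box_rel n T"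
  unfolding box_rel_def by blast

lemma box_rel_column: "x \<in> {1..2*n} \<Longrightarrow> (x, column n x) \<in> box_rel n S"
  using column_range[of x n] unfolding box_rel_def by auto

lemma box_rel_top:
  "j \<in> {1..n} \<Longrightarrow> j' \<in> {1..n} \<Longrightarrow> (j, j') \<in> box_rel n S \<longleftrightarrow> {min j j'..<max j j'} \<subseteq> S"
  unfolding box_rel_def by auto

lemma box_rel_bottom_Suc:
  assumes "k \<in> S" "1 \<le> k" "k < n"
  shows "(n + k, n + Suc k) \<in> box_rel n S"
  using assms unfolding box_rel_def column_def by auto

lemma box_rel_bottomD:
  "(n + c, n + e) \<in> box_rel n S \<Longrightarrow> 1 \<le> c \<Longrightarrow> c \<le> e \<Longrightarrow> {c..<e} \<subseteq> S"
  unfolding box_rel_def by auto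

lemma box_rel_empty: "box_rel n {} = pair_rel n (id_pairing n)"
proof -
  have "{min a b..<max a b} = {} \<longleftrightarrow> a = b" for a b :: nat
    by (simp add: min_def max_def)
  moreover have "column n x = column n y \<longleftrightarrow> y = x \<or> y = id_pairing n x"
    if "x \<in> {1..2*n}" "y \<in> {1..2*n}" for x y
    using that unfolding column_def id_pairing_def by auto
  ultimately show ?thesis
    unfolding box_rel_def pair_rel_def by auto
qed

lemma idp_eq_blocks_box_rel: "idp n = blocks n (box_rel n {})"
  unfolding idp_eq_blocks_id_pairing box_rel_empty ..

lemma rtrancl_Suc_chain:
  assumes "\<And>k. i \<le> k \<Longrightarrow> k < j \<Longrightarrow> (f k, f (Suc k)) \<in> R\<^sup>*" and "i \<le> j"
  shows "(f i, f j) \<in> R\<^sup>*"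
  using assms(2) by (induction j rule: dec_induct) (auto intro: rtrancl_trans assms(1))

lemma convex_nat_set_is_interval:
  fixes T :: "nat set"
  assumes "finite T" and convex: "\<And>a b j. a \<in> T \<Longrightarrow> b \<in> T \<Longrightarrow> a \<le> j \<Longrightarrow> j \<le> b \<Longrightarrow> j \<in> T"
  shows "\<exists>a b. T = {a..b}"
proof (cases "T = {}")
  case True
  then show ?thesis
    by (intro exI[of _ 1] exI[of _ 0]) simp
next
  case False
  then have "Min T \<in> T" "Max T \<in> T"
    using \<open>finite T\<close> by simp_all
  then have "{Min T..Max T} \<subseteq> T"
    using convex[of "Min T" "Max T"] by auto
  moreover have "T \<subseteq> {Min T..Max T}"
    using \<open>finite T\<close> by auto
  ultimately show ?thesis
    by blast
qed

lemma boxed_blocks_box_rel: "boxed n (blocks n (box_rel n S))"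
  unfolding boxed_def
proof (intro conjI ballI)
  show "setpart n (blocks n (box_rel n S))"
    unfolding setpart_def by (rule partition_on_quotient[OF equiv_box_rel])
  show "prefines (idp n) (blocks n (box_rel n S))"
    unfolding idp_eq_blocks_box_rel prefines_quotient_iff[OF equiv_box_rel equiv_box_rel]
    by (rule box_rel_mono) simp
  fix B assume "B \<in> blocks n (box_rel n S)"
  then obtain z where B: "B = box_rel n S `` {z}"
    by (auto elim: quotientE)
  have convex: "j \<in> B \<inter> {1..n}"
    if a: "a \<in> B \<inter> {1..n}" and b: "b \<in> B \<inter> {1..n}" and j: "a \<le> j" "j \<le> b" for a b j
  proof -
    have "(a, b) \<in> box_rel n S"
      using a b box_rel_sym box_rel_trans unfolding B by blast
    then have "(a, j) \<in> box_rel n S"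
      using a b j box_rel_top by auto
    then show ?thesis
      using a j b box_rel_trans unfolding B by auto
  qed
  show "\<exists>a b. B \<inter> {1..n} = {a..b}"
    by (rule convex_nat_set_is_interval) (simp, rule convex)
qed

lemma equiv_column_rel:
  assumes R: "equiv {1..2*n} R" and columns: "box_rel n {} \<subseteq> R" and x: "x \<in> {1..2*n}"
  shows "(x, column n x) \<in> R" "(column n x, x) \<in> R"
proof -
  show "(x, column n x) \<in> R"
    using columns box_rel_column[OF x] by blast
  then show "(column n x, x) \<in> R"
    using R by (auto elim: equivE dest: symD)
qed

lemma equiv_subset_box_rel:
  assumes R: "equiv {1..2*n} R" and columns: "box_rel n {} \<subseteq> R"
    and intervals: "\<And>x. x \<in> {1..2*n} \<Longrightarrow> \<exists>l u. R `` {x} \<inter> {1..n} = {l..u}"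
  shows "R \<subseteq> box_rel n {k \<in> {1..<n}. (k, Suc k) \<in> R}"
proof safe
  fix x y assume xy: "(x, y) \<in> R"
  have symR: "sym R" and transR: "trans R"
    using R by (auto elim: equivE)
  have x: "x \<in> {1..2*n}" and y: "y \<in> {1..2*n}"
    using equiv_type[OF R] xy by blast+
  let ?a = "column n x" and ?b = "column n y"
  have ab: "?a \<in> {1..n}" "?b \<in> {1..n}"
    using column_range x y by blast+
  have "(?a, ?b) \<in> R"
    using equiv_column_rel[OF R columns x] equiv_column_rel[OF R columns y] xy transR
    by (blast dest: transD)
  moreover obtain l u where lu: "R `` {?a} \<inter> {1..n} = {l..u}"
    using intervals ab by force
  ultimately have lu_ab: "?a \<in> {l..u}" "?b \<in> {l..u}"
    using ab equiv_class_self[OF R, of ?a] lu by auto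
  have "(k, Suc k) \<in> R" "1 \<le> k" "k < n" if k: "min ?a ?b \<le> k" "k < max ?a ?b" for k
  proof -
    have "k \<in> {l..u}" "Suc k \<in> {l..u}"
      using lu_ab k by auto
    then have "(?a, k) \<in> R" "(?a, Suc k) \<in> R"
      using lu by blast+
    then show "(k, Suc k) \<in> R"
      using symR transR by (blast dest: symD transD)
    show "1 \<le> k" "k < n"
      using k ab by auto
  qed
  then show "(x, y) \<in> box_rel n {k \<in> {1..<n}. (k, Suc k) \<in> R}"
    using x y unfolding box_rel_def by auto
qed

lemma box_rel_subset_equiv:
  assumes R: "equiv {1..2*n} R" and columns: "box_rel n {} \<subseteq> R"
  shows "box_rel n {k \<in> {1..<n}. (k, Suc k) \<in> R} \<subseteq> R"
proof safe
  fix x y assume xy: "(x, y) \<in> box_rel n {k \<in> {1..<n}. (k, Suc k) \<in> R}"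
  have symR: "sym R" and transR: "trans R"
    using R by (auto elim: equivE)
  have x: "x \<in> {1..2*n}" and y: "y \<in> {1..2*n}"
    using xy unfolding box_rel_def by blast+
  let ?a = "column n x" and ?b = "column n y"
  have "{min ?a ?b..<max ?a ?b} \<subseteq> {k \<in> {1..<n}. (k, Suc k) \<in> R}"
    using xy unfolding box_rel_def by blast
  then have "(min ?a ?b, max ?a ?b) \<in> R\<^sup>*"
    by - (rule rtrancl_Suc_chain[where f = "\<lambda>k. k"], auto)
  moreover have "min ?a ?b \<in> {1..2*n}"
    using column_range[OF x] column_range[OF y] by auto
  ultimately have "(min ?a ?b, max ?a ?b) \<in> R"
    using equiv_class_self[OF R] trancl_id[OF transR] by (auto dest: rtranclD)
  then have "(?a, ?b) \<in> R"
    using symR by (cases "?a \<le> ?b") (auto simp: min_def max_def dest: symD)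
  then show "(x, y) \<in> R"
    using equiv_column_rel[OF R columns x] equiv_column_rel[OF R columns y] transR
    by (blast dest: transD)
qed

lemma boxed_iff: "boxed n J \<longleftrightarrow> (\<exists>S\<subseteq>{1..<n}. J = blocks n (box_rel n S))"
proof
  assume boxed: "boxed n J"
  then obtain R where R: "equiv {1..2*n} R" and J: "J = blocks n R"
    unfolding boxed_def setpart_def partition_on_alt by blast
  have columns: "box_rel n {} \<subseteq> R"
    using boxed prefines_quotient_iff[OF equiv_box_rel R]
    unfolding boxed_def J idp_eq_blocks_box_rel by blast
  define S where "S = {k \<in> {1..<n}. (k, Suc k) \<in> R}"
  have "\<exists>l u. R `` {x} \<inter> {1..n} = {l..u}" if "x \<in> {1..2*n}" for x
    using boxed quotientI[OF that] unfolding boxed_def J by blast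
  then have "R \<subseteq> box_rel n S"
    unfolding S_def by (rule equiv_subset_box_rel[OF R columns])
  then have "R = box_rel n S"
    using box_rel_subset_equiv[OF R columns] unfolding S_def by (rule antisym)
  moreover have "S \<subseteq> {1..<n}"
    unfolding S_def by blast
  ultimately show "\<exists>S\<subseteq>{1..<n}. J = blocks n (box_rel n S)"
    unfolding J by blast
next
  assume "\<exists>S\<subseteq>{1..<n}. J = blocks n (box_rel n S)"
  then show "boxed n J"
    using boxed_blocks_box_rel by blast
qed

definition compatible :: "nat \<Rightarrow> nat set \<Rightarrow> (nat \<Rightarrow> nat) \<Rightarrow> bool" where
  "compatible n S p \<longleftrightarrow> (\<forall>x\<in>{1..2*n}. (x, p x) \<in> box_rel n S)"

lemma compatibleD: "compatible n S p \<Longrightarrow> x \<in> {1..2*n} \<Longrightarrow> (x, p x) \<in> box_rel n S"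
  unfolding compatible_def by blast

lemma pair_rel_subset_box_rel_iff:
  "fpf_involution n p \<Longrightarrow> pair_rel n p \<subseteq> box_rel n S \<longleftrightarrow> compatible n S p"
  unfolding compatible_def pair_rel_def using box_rel_refl fpf_involutionD(1) by fastforce

lemma BR_eq: "BR n = {(blocks n (pair_rel n p), blocks n (box_rel n S)) | p S.
    fpf_involution n p \<and> S \<subseteq> {1..<n} \<and> compatible n S p}"
proof -
  have "prefines (blocks n (pair_rel n p)) (blocks n (box_rel n S)) \<longleftrightarrow> compatible n S p"
    if "fpf_involution n p" for p S
    using prefines_quotient_iff[OF equiv_pair_rel[OF that] equiv_box_rel]
      pair_rel_subset_box_rel_iff[OF that] by simp
  then show ?thesis
    unfolding BR_def brauer_iff boxed_iff by blast
qed


section \<open>Multiplication by the generators\<close>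

lemma pair_blocks_label_eq:
  assumes p: "fpf_involution n p" and B: "B \<in> blocks n (pair_rel n p)" and "a \<in> B" "b \<in> B"
    and g: "\<And>x. x \<in> {1..2*n} \<Longrightarrow> g x = g (p x)"
  shows "g a = g b"
  using B assms(3,4) g unfolding blocks_pair_rel[OF p] by auto

lemma stack_path_pair:
  assumes p: "fpf_involution n p" and x: "x \<in> {1..2*n}"
  shows "(mapI n x, mapI n (p x)) \<in> (stack_edges n (blocks n (pair_rel n p)) K)\<^sup>*"
  by (rule stack_path_quotient[OF equiv_pair_rel[OF p]])
    (use x fpf_involutionD(1)[OF p x] in \<open>simp add: pair_rel_def\<close>)

lemma pmult_eq_blocks_pair_rel:
  assumes q: "fpf_involution n q"
    and first: "\<And>B a b. B \<in> I \<Longrightarrow> a \<in> B \<Longrightarrow> b \<in> B \<Longrightarrow> lab (mapI n a) = lab (mapI n b)"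
    and second: "\<And>B a b. B \<in> K \<Longrightarrow> a \<in> B \<Longrightarrow> b \<in> B \<Longrightarrow> lab (mapJ n a) = lab (mapJ n b)"
    and outer_label: "\<And>u. u \<in> {1..2*n} \<Longrightarrow> lab (outer_point n u) = {u, q u}"
    and connected: "\<And>u. u \<in> {1..2*n} \<Longrightarrow>
      (outer_point n u, outer_point n (q u)) \<in> (stack_edges n I K)\<^sup>*"
  shows "pmult n I K = blocks n (pair_rel n q)"
proof (rule pmult_eq_quotient[OF equiv_pair_rel[OF q] first second])
  show "lab (outer_point n u) = pair_rel n q `` {u}" if "u \<in> {1..2*n}" for u
    using outer_label[OF that] pair_rel_class[OF q that] by simp
  show "(outer_point n u, outer_point n v) \<in> (stack_edges n I K)\<^sup>*"
    if "(u, v) \<in> pair_rel n q" for u v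
    using that connected unfolding pair_rel_def by auto
qed

lemma fpf_involution_conj:
  assumes p: "fpf_involution n p"
    and \<tau>: "\<And>x. x \<in> {1..2*n} \<Longrightarrow> \<tau> x \<in> {1..2*n}" "\<And>x. \<tau> (\<tau> x) = x"
  shows "fpf_involution n (\<tau> \<circ> p \<circ> \<tau>)"
  using fpf_involutionD[OF p] \<tau> unfolding fpf_involution_def by (metis comp_apply)

lemma stack_path_perm_outer:
  assumes \<tau>_range: "\<And>x. x \<in> {1..2*n} \<Longrightarrow> \<tau> x \<in> {1..2*n}"
    and \<tau>_inv: "\<And>x. \<tau> (\<tau> x) = x"
    and \<tau>_top: "\<And>x. x \<le> n \<Longrightarrow> \<tau> x = x"
    and \<tau>_bottom: "\<And>x. n < x \<Longrightarrow> n < \<tau> x"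
    and u: "u \<in> {1..2*n}"
  shows "(outer_point n u, mapI n (\<tau> u)) \<in> (stack_edges n I ((\<lambda>j. {j, \<tau> (n + j)}) ` {1..n}))\<^sup>*"
proof (cases "u \<le> n")
  case True
  then show ?thesis
    using \<tau>_top by simp
next
  case False
  define j where "j = \<tau> u - n"
  have "n < \<tau> u" "\<tau> u \<in> {1..2*n}"
    using False u \<tau>_bottom \<tau>_range by auto
  then have j: "j \<in> {1..n}" "\<tau> (n + j) = u"
    unfolding j_def using \<tau>_inv by auto
  then have "(mapJ n j, mapJ n u) \<in> (stack_edges n I ((\<lambda>j. {j, \<tau> (n + j)}) ` {1..n}))\<^sup>*"
    by (intro stack_path_second[of "{j, u}"]) blast+
  then show ?thesis
    using False j \<open>n < \<tau> u\<close> unfolding j_def by (auto intro: stack_path_sym)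
qed

lemma stack_path_perm:
  assumes p: "fpf_involution n p"
    and \<tau>_range: "\<And>x. x \<in> {1..2*n} \<Longrightarrow> \<tau> x \<in> {1..2*n}"
    and \<tau>_inv: "\<And>x. \<tau> (\<tau> x) = x"
    and \<tau>_top: "\<And>x. x \<le> n \<Longrightarrow> \<tau> x = x"
    and \<tau>_bottom: "\<And>x. n < x \<Longrightarrow> n < \<tau> x"
    and u: "u \<in> {1..2*n}"
  shows "(outer_point n u, outer_point n ((\<tau> \<circ> p \<circ> \<tau>) u))
    \<in> (stack_edges n (blocks n (pair_rel n p)) ((\<lambda>j. {j, \<tau> (n + j)}) ` {1..n}))\<^sup>*"
proof -
  let ?q = "\<tau> \<circ> p \<circ> \<tau>"
  let ?E = "stack_edges n (blocks n (pair_rel n p)) ((\<lambda>j. {j, \<tau> (n + j)}) ` {1..n})"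
  have to_first: "(outer_point n v, mapI n (\<tau> v)) \<in> ?E\<^sup>*" if "v \<in> {1..2*n}" for v
    using \<tau>_range \<tau>_inv \<tau>_top \<tau>_bottom that by (rule stack_path_perm_outer)
  have "(outer_point n u, mapI n (\<tau> u)) \<in> ?E\<^sup>*"
    by (rule to_first[OF u])
  also have "(mapI n (\<tau> u), mapI n (\<tau> (?q u))) \<in> ?E\<^sup>*"
    using stack_path_pair[OF p \<tau>_range[OF u]] \<tau>_inv by simp
  also have "(mapI n (\<tau> (?q u)), outer_point n (?q u)) \<in> ?E\<^sup>*"
    using to_first[of "?q u"] \<tau>_range fpf_involutionD(1)[OF p \<tau>_range[OF u]]
    by (auto intro: stack_path_sym)
  finally show ?thesis .
qed

lemma pmult_involutive_perm:
  assumes p: "fpf_involution n p"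
    and \<tau>_range: "\<And>x. x \<in> {1..2*n} \<Longrightarrow> \<tau> x \<in> {1..2*n}"
    and \<tau>_inv: "\<And>x. \<tau> (\<tau> x) = x"
    and \<tau>_top: "\<And>x. x \<le> n \<Longrightarrow> \<tau> x = x"
    and \<tau>_bottom: "\<And>x. n < x \<Longrightarrow> n < \<tau> x"
  shows "pmult n (blocks n (pair_rel n p)) ((\<lambda>j. {j, \<tau> (n + j)}) ` {1..n})
    = blocks n (pair_rel n (\<tau> \<circ> p \<circ> \<tau>))"
proof -
  let ?q = "\<tau> \<circ> p \<circ> \<tau>" and ?K = "(\<lambda>j. {j, \<tau> (n + j)}) ` {1..n}"
  define f where "f z = (if fst z = 0 then snd z else if fst z = 1 then \<tau> (n + snd z) else n + snd z)"
    for z :: "nat \<times> nat"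
  define lab where "lab z = {f z, ?q (f z)}" for z
  have f_mapI: "f (mapI n x) = \<tau> x" if "x \<in> {1..2*n}" for x
    using \<tau>_top by (cases "x \<le> n") (auto simp: f_def)
  show ?thesis
  proof (rule pmult_eq_blocks_pair_rel[where lab = lab])
    show "fpf_involution n ?q"
      by (rule fpf_involution_conj[OF p \<tau>_range \<tau>_inv])
    show "lab (mapI n a) = lab (mapI n b)" if "B \<in> blocks n (pair_rel n p)" "a \<in> B" "b \<in> B" for B a b
      using p that
    proof (rule pair_blocks_label_eq[where g = "\<lambda>x. lab (mapI n x)"])
      show "lab (mapI n x) = lab (mapI n (p x))" if "x \<in> {1..2*n}" for x
        using that f_mapI fpf_involutionD[OF p that] \<tau>_inv unfolding lab_def by auto
    qed
    show "lab (mapJ n a) = lab (mapJ n b)" if B: "B \<in> ?K" and ab: "a \<in> B" "b \<in> B" for B a b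
    proof -
      obtain j where j: "j \<in> {1..n}" "B = {j, \<tau> (n + j)}"
        using B by blast
      then have "f (mapJ n j) = f (mapJ n (\<tau> (n + j)))"
        using \<tau>_bottom[of "n + j"] by (simp add: f_def)
      then show ?thesis
        using ab j unfolding lab_def by auto
    qed
    show "lab (outer_point n u) = {u, ?q u}" if "u \<in> {1..2*n}" for u
      by (cases "u \<le> n") (auto simp: lab_def f_def)
    show "(outer_point n u, outer_point n (?q u)) \<in> (stack_edges n (blocks n (pair_rel n p)) ?K)\<^sup>*"
      if "u \<in> {1..2*n}" for u
      using p \<tau>_range \<tau>_inv \<tau>_top \<tau>_bottom that by (rule stack_path_perm)
  qed
qed

lemma pmult_idp: "fpf_involution n p \<Longrightarrow> pmult n (blocks n (pair_rel n p)) (idp n) = blocks n (pair_rel n p)"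
  using pmult_involutive_perm[where \<tau> = "\<lambda>x. x"] unfolding idp_eq_image by (simp add: comp_def)

definition bottom_swap :: "nat \<Rightarrow> nat \<Rightarrow> nat \<Rightarrow> nat" where
  "bottom_swap n k x = (if x = n + k then n + Suc k else if x = n + Suc k then n + k else x)"

lemma bottom_swap_involutive [simp]: "bottom_swap n k (bottom_swap n k x) = x"
  unfolding bottom_swap_def by auto

lemma fpf_involution_bottom_swap:
  "fpf_involution n p \<Longrightarrow> 1 \<le> k \<Longrightarrow> k < n \<Longrightarrow>
    fpf_involution n (bottom_swap n k \<circ> p \<circ> bottom_swap n k)"
  by (rule fpf_involution_conj) (auto simp: bottom_swap_def)

lemma sgen_eq:
  assumes "1 \<le> k" "k < n"
  shows "sgen n k = (\<lambda>j. {j, bottom_swap n k (n + j)}) ` {1..n}"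
proof -
  let ?f = "\<lambda>j. {j, bottom_swap n k (n + j)}"
  have "{1..n} = ({1..n} - {k, k + 1}) \<union> {k, k + 1}"
    using assms by auto
  then have "?f ` {1..n} = ?f ` ({1..n} - {k, k + 1}) \<union> ?f ` {k, k + 1}"
    by (metis image_Un)
  also have "?f ` ({1..n} - {k, k + 1}) = idrest n k"
    unfolding idrest_def bottom_swap_def by auto
  also have "?f ` {k, k + 1} = {{k, n + (k + 1)}, {k + 1, n + k}}"
    unfolding bottom_swap_def by simp
  finally show ?thesis
    unfolding sgen_def ..
qed

lemma pmult_sgen:
  assumes "fpf_involution n p" "1 \<le> k" "k < n"
  shows "pmult n (blocks n (pair_rel n p)) (sgen n k)
    = blocks n (pair_rel n (bottom_swap n k \<circ> p \<circ> bottom_swap n k))"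
  unfolding sgen_eq[OF assms(2,3)]
  by (rule pmult_involutive_perm) (use assms in \<open>auto simp: bottom_swap_def\<close>)

definition link :: "nat \<Rightarrow> nat \<Rightarrow> (nat \<Rightarrow> nat) \<Rightarrow> nat \<Rightarrow> nat" where
  "link c d p x = (if x = c then d else if x = d then c
     else if p x = c then p d else if p x = d then p c else p x)"

lemma link_facts:
  assumes p: "fpf_involution n p" and cd: "c \<in> {1..2*n}" "d \<in> {1..2*n}" "c \<noteq> d"
  shows "link c d p c = d" "link c d p d = c"
    "link c d p (p c) = p d" "link c d p (p d) = p c"
    "x \<in> {1..2*n} \<Longrightarrow> x \<notin> {c, d, p c, p d} \<Longrightarrow> link c d p x = p x"
  using fpf_involutionD[OF p cd(1)] fpf_involutionD[OF p cd(2)] fpf_involutionD(3)[OF p, of x] cd(3)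
  unfolding link_def by auto

lemma fpf_involution_link:
  assumes p: "fpf_involution n p" and cd: "c \<in> {1..2*n}" "d \<in> {1..2*n}" "c \<noteq> d"
  shows "fpf_involution n (link c d p)"
  unfolding fpf_involution_def
proof
  fix x assume x: "x \<in> {1..2*n}"
  note link = link_facts[OF p cd]
  note pc = fpf_involutionD[OF p cd(1)] and pd = fpf_involutionD[OF p cd(2)]
  have "p c \<noteq> p d"
    using pc(3) pd(3) cd(3) by metis
  consider "x \<in> {c, d}" | "x \<in> {p c, p d}" | "x \<notin> {c, d, p c, p d}"
    by blast
  then show "link c d p x \<in> {1..2*n} \<and> link c d p x \<noteq> x \<and> link c d p (link c d p x) = x"
  proof cases
    case 1
    then show ?thesis
      using link(1,2) cd by auto
  next
    case 2
    then show ?thesis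
      using link(3,4) pc(1) pd(1) \<open>p c \<noteq> p d\<close> by auto
  next
    case 3
    have "p x \<notin> {c, d, p c, p d}"
      using 3 fpf_involutionD(3)[OF p x] pc(3) pd(3) by auto
    then show ?thesis
      using 3 link(5)[OF x] link(5)[OF fpf_involutionD(1)[OF p x]] fpf_involutionD[OF p x] by auto
  qed
qed

lemma stack_path_link:
  assumes p: "fpf_involution n p" and cd: "c \<in> {1..2*n}" "d \<in> {1..2*n}" "c \<noteq> d"
    and mid: "(mapI n c, mapI n d) \<in> (stack_edges n (blocks n (pair_rel n p)) K)\<^sup>*"
    and u: "u \<in> {1..2*n}" "u \<notin> {c, d}"
  shows "(mapI n u, mapI n (link c d p u)) \<in> (stack_edges n (blocks n (pair_rel n p)) K)\<^sup>*"
proof -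
  let ?E = "stack_edges n (blocks n (pair_rel n p)) K"
  have u_pu: "(mapI n u, mapI n (p u)) \<in> ?E\<^sup>*"
    by (rule stack_path_pair[OF p u(1)])
  have c_pc: "(mapI n c, mapI n (p c)) \<in> ?E\<^sup>*"
    by (rule stack_path_pair[OF p cd(1)])
  have d_pd: "(mapI n d, mapI n (p d)) \<in> ?E\<^sup>*"
    by (rule stack_path_pair[OF p cd(2)])
  consider "p u = c" | "p u = d" | "p u \<notin> {c, d}"
    by blast
  then show ?thesis
  proof cases
    case 1
    then have "link c d p u = p d"
      using u(2) unfolding link_def by auto
    then show ?thesis
      using u_pu mid d_pd 1 by (metis rtrancl_trans)
  next
    case 2
    then have "link c d p u = p c"
      using u(2) cd(3) unfolding link_def by auto
    then show ?thesis
      using u_pu stack_path_sym[OF mid] c_pc 2 by (metis rtrancl_trans)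
  next
    case 3
    then show ?thesis
      using u_pu u(2) unfolding link_def by auto
  qed
qed

lemma link_representative_pair:
  assumes p: "fpf_involution n p" and cd: "c \<in> {1..2*n}" "d \<in> {1..2*n}" "c \<noteq> d"
    and \<rho>: "\<And>y. \<rho> y = (if y \<in> {c, d} then p c else y)" and x: "x \<in> {1..2*n}"
  shows "{\<rho> x, link c d p (\<rho> x)} = {\<rho> (p x), link c d p (\<rho> (p x))}"
proof -
  note pc = fpf_involutionD[OF p cd(1)] and pd = fpf_involutionD[OF p cd(2)]
  note link = link_facts[OF p cd]
  have px: "p x \<in> {1..2*n}" "p (p x) = x"
    using fpf_involutionD[OF p x] by simp_all
  have "p x \<notin> {c, d, p c, p d}" if "x \<notin> {c, d, p c, p d}"
    using that px(2) pc(3) pd(3) by auto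
  then consider "x \<in> {c, d, p c, p d}" | "x \<notin> {c, d, p c, p d}" "p x \<notin> {c, d, p c, p d}"
    by blast
  then show ?thesis
  proof cases
    case 1
    then show ?thesis
      unfolding \<rho> using link(1-4) pc pd cd(3) by auto
  next
    case 2
    then show ?thesis
      unfolding \<rho> using link(5)[OF x] link(5)[OF px(1)] px(2) by auto
  qed
qed

lemma stack_path_tgen_outer:
  assumes k: "1 \<le> k" "k < n" and u: "u \<in> {1..2*n}" "u \<notin> {n + k, n + Suc k}"
  shows "(outer_point n u, mapI n u) \<in> (stack_edges n I (tgen n k))\<^sup>*"
proof (cases "u \<le> n")
  case False
  then have "{u - n, u} \<in> tgen n k"
    using u unfolding tgen_def idrest_def by (intro UnI1 CollectI exI[of _ "u - n"]) auto
  then have "(mapJ n (u - n), mapJ n u) \<in> (stack_edges n I (tgen n k))\<^sup>*"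
    by (rule stack_path_second) auto
  then show ?thesis
    using False u by (auto intro: stack_path_sym)
qed simp

lemma stack_path_tgen:
  assumes p: "fpf_involution n p" and k: "1 \<le> k" "k < n" and u: "u \<in> {1..2*n}"
  shows "(outer_point n u, outer_point n (link (n + k) (n + Suc k) p u))
    \<in> (stack_edges n (blocks n (pair_rel n p)) (tgen n k))\<^sup>*"
proof -
  let ?c = "n + k" and ?d = "n + Suc k"
  let ?q = "link ?c ?d p"
  let ?E = "stack_edges n (blocks n (pair_rel n p)) (tgen n k)"
  have cd: "?c \<in> {1..2*n}" "?d \<in> {1..2*n}" "?c \<noteq> ?d"
    using k by auto
  have pairs: "(mapJ n a, mapJ n b) \<in> ?E\<^sup>*" if "{a, b} \<in> tgen n k" for a b
    using stack_path_second[OF that] by simp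
  show ?thesis
  proof (cases "u \<in> {?c, ?d}")
    case True
    have "(outer_point n ?c, outer_point n ?d) \<in> ?E\<^sup>*"
      using pairs[of ?c ?d] k unfolding tgen_def by auto
    then show ?thesis
      using True link_facts(1,2)[OF p cd] by (auto intro: stack_path_sym)
  next
    case False
    have qu: "?q u \<in> {1..2*n}" "?q u \<notin> {?c, ?d}"
      using fpf_involutionD[OF fpf_involution_link[OF p cd] u] False link_facts(1,2)[OF p cd] by auto
    have "(mapI n ?c, mapI n ?d) \<in> ?E\<^sup>*"
      using pairs[of k "k + 1"] k unfolding tgen_def by auto
    then have "(mapI n u, mapI n (?q u)) \<in> ?E\<^sup>*"
      by (rule stack_path_link[OF p cd _ u False])
    then show ?thesis
      using stack_path_tgen_outer[OF k u False] stack_path_tgen_outer[OF k qu]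
      by (meson rtrancl_trans stack_path_sym)
  qed
qed

lemma pmult_tgen:
  assumes p: "fpf_involution n p" and k: "1 \<le> k" "k < n"
  shows "pmult n (blocks n (pair_rel n p)) (tgen n k)
    = blocks n (pair_rel n (link (n + k) (n + Suc k) p))"
proof -
  define c where "c = n + k"
  define d where "d = n + Suc k"
  let ?q = "link c d p"
  have cd: "c \<in> {1..2*n}" "d \<in> {1..2*n}" "c \<noteq> d"
    using k unfolding c_def d_def by auto
  define \<rho> where "\<rho> y = (if y \<in> {c, d} then p c else y)" for y
  define lab where "lab z = (if z = (1, k) \<or> z = (1, Suc k) then {p c, ?q (p c)}
    else {unmap n z, ?q (unmap n z)})" for z
  have lab_mapI: "lab (mapI n x) = {\<rho> x, ?q (\<rho> x)}" if "x \<in> {1..2*n}" for x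
    using that k unfolding lab_def \<rho>_def c_def d_def mapI_def unmap_def by auto
  show ?thesis
    unfolding c_def[symmetric] d_def[symmetric]
  proof (rule pmult_eq_blocks_pair_rel[OF fpf_involution_link[OF p cd], where lab = lab])
    show "lab (mapI n a) = lab (mapI n b)" if "B \<in> blocks n (pair_rel n p)" "a \<in> B" "b \<in> B" for B a b
      using p that
    proof (rule pair_blocks_label_eq[where g = "\<lambda>x. lab (mapI n x)"])
      fix x assume x: "x \<in> {1..2*n}"
      show "lab (mapI n x) = lab (mapI n (p x))"
        unfolding lab_mapI[OF x] lab_mapI[OF fpf_involutionD(1)[OF p x]]
        by (rule link_representative_pair[OF p cd \<rho>_def x])
    qed
    show "lab (mapJ n a) = lab (mapJ n b)" if B: "B \<in> tgen n k" and ab: "a \<in> B" "b \<in> B" for B a b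
    proof -
      have "lab (mapJ n j) = lab (mapJ n (n + j))" if "j \<in> {1..n}" "j \<noteq> k" "j \<noteq> k + 1" for j
        using that unfolding lab_def by auto
      moreover have "lab (mapJ n k) = lab (mapJ n (k + 1))"
        using k unfolding lab_def by auto
      moreover have "lab (mapJ n c) = lab (mapJ n d)"
        using cd link_facts(1,2)[OF p cd] k unfolding lab_def c_def d_def by (auto simp: insert_commute)
      moreover have "B \<in> idrest n k \<or> B = {k, k + 1} \<or> B = {c, d}"
        using B unfolding tgen_def c_def d_def by auto
      ultimately show ?thesis
        using ab unfolding idrest_def by auto
    qed
    show "lab (outer_point n u) = {u, ?q u}" for u
      unfolding lab_def outer_point_def by auto
    show "(outer_point n u, outer_point n (?q u)) \<in> (stack_edges n (blocks n (pair_rel n p)) (tgen n k))\<^sup>*"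
      if "u \<in> {1..2*n}" for u
      using stack_path_tgen[OF p k that] unfolding c_def d_def .
  qed
qed

lemma stack_path_bgen_outer:
  assumes i: "1 \<le> i" "i < n" and u: "u \<in> {1..2*n}"
  shows "(outer_point n u, (1, column n u)) \<in> (stack_edges n (blocks n (box_rel n S)) (bgen n i))\<^sup>*"
proof (cases "u \<le> n")
  case True
  have "(u, n + u) \<in> box_rel n S"
    using box_rel_sym[OF box_rel_column[of "n + u" n S]] True u by auto
  then show ?thesis
    using stack_path_quotient[OF equiv_box_rel] True u by fastforce
next
  case False
  define j where "j = u - n"
  have j: "j \<in> {1..n}" "u = n + j"
    using False u unfolding j_def by auto
  have "\<exists>B\<in>bgen n i. j \<in> B \<and> n + j \<in> B"
    using j unfolding bgen_def idrest_def by (cases "j = i \<or> j = i + 1") auto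
  then have "(mapJ n j, mapJ n (n + j)) \<in> (stack_edges n (blocks n (box_rel n S)) (bgen n i))\<^sup>*"
    using stack_path_second by blast
  then show ?thesis
    using j by (simp add: stack_path_sym)
qed

lemma stack_path_bgen_Suc:
  assumes i: "1 \<le> i" "i < n" and k: "k \<in> insert i S" "1 \<le> k" "k < n"
  shows "((1, k), (1, Suc k)) \<in> (stack_edges n (blocks n (box_rel n S)) (bgen n i))\<^sup>*"
proof (cases "k = i")
  case True
  have "{i, i + 1, n + i, n + (i + 1)} \<in> bgen n i"
    unfolding bgen_def by blast
  then show ?thesis
    using stack_path_second[of _ "bgen n i" i "i + 1" n] True i by auto
next
  case False
  then have "(mapI n (n + k), mapI n (n + Suc k)) \<in> (stack_edges n (blocks n (box_rel n S)) (bgen n i))\<^sup>*"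
    using stack_path_quotient[OF equiv_box_rel box_rel_bottom_Suc[of k S n]] k by blast
  then show ?thesis
    using k by simp
qed

lemma unmap_mapJ: "x \<in> {1..2*n} \<Longrightarrow> unmap n (mapJ n x) = n + column n x"
  unfolding mapJ_def unmap_def column_def by auto

lemma bgen_class_eq:
  assumes i: "1 \<le> i" "i < n" and B: "B \<in> bgen n i" and ab: "a \<in> B" "b \<in> B"
  shows "box_rel n (insert i S) `` {unmap n (mapJ n a)} = box_rel n (insert i S) `` {unmap n (mapJ n b)}"
proof -
  let ?R = "box_rel n (insert i S)"
  consider (vertical) j where "j \<in> {1..n}" "B = {j, n + j}"
    | (big) "B = {i, i + 1, n + i, n + (i + 1)}"
    using B unfolding bgen_def idrest_def by blast
  then show ?thesis
  proof cases
    case vertical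
    then have "unmap n (mapJ n x) = n + j" if "x \<in> B" for x
      using that unmap_mapJ by auto
    then show ?thesis
      using ab by simp
  next
    case big
    have class_eq: "?R `` {n + Suc i} = ?R `` {n + i}"
      using equiv_class_eq[OF equiv_box_rel box_rel_bottom_Suc[of i "insert i S" n]] i by simp
    have "?R `` {unmap n (mapJ n x)} = ?R `` {n + i}" if "x \<in> B" for x
    proof -
      have "x \<in> {1..2*n}" "n + column n x \<in> {n + i, n + Suc i}"
        using that big i by (auto simp: column_def)
      then show ?thesis
        using class_eq unmap_mapJ by auto
    qed
    then show ?thesis
      using ab by simp
  qed
qed

lemma pmult_bgen:
  assumes i: "1 \<le> i" "i < n"
  shows "pmult n (blocks n (box_rel n S)) (bgen n i) = blocks n (box_rel n (insert i S))"
proof (rule pmult_eq_quotient[OF equiv_box_rel, where lab = "\<lambda>z. box_rel n (insert i S) `` {unmap n z}"])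
  let ?R = "box_rel n (insert i S)"
  let ?E = "stack_edges n (blocks n (box_rel n S)) (bgen n i)"
  show "?R `` {unmap n (mapI n a)} = ?R `` {unmap n (mapI n b)}"
    if "B \<in> blocks n (box_rel n S)" "a \<in> B" "b \<in> B" for B a b
  proof -
    have "(a, b) \<in> box_rel n S"
      using in_quotient_imp_in_rel[OF equiv_box_rel that(1)] that(2,3) by blast
    then have "(a, b) \<in> ?R"
      using box_rel_mono[of S "insert i S" n] by blast
    then show ?thesis
      using equiv_class_eq[OF equiv_box_rel] by simp
  qed
  show "?R `` {unmap n (mapJ n a)} = ?R `` {unmap n (mapJ n b)}"
    if "B \<in> bgen n i" "a \<in> B" "b \<in> B" for B a b
    using bgen_class_eq[OF i that] .
  show "?R `` {unmap n (outer_point n u)} = ?R `` {u}" for u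
    by simp
  show "(outer_point n u, outer_point n v) \<in> ?E\<^sup>*" if uv: "(u, v) \<in> ?R" for u v
  proof -
    let ?a = "column n u" and ?b = "column n v"
    have uv_range: "u \<in> {1..2*n}" "v \<in> {1..2*n}"
      using uv unfolding box_rel_def by blast+
    then have "?a \<in> {1..n}" "?b \<in> {1..n}"
      using column_range by blast+
    then have "((1, min ?a ?b), (1, max ?a ?b)) \<in> ?E\<^sup>*"
      using uv stack_path_bgen_Suc[OF i] unfolding box_rel_def
      by - (rule rtrancl_Suc_chain[where f = "Pair 1"], auto)
    then have "((1, ?a), (1, ?b)) \<in> ?E\<^sup>*"
      by (cases "?a \<le> ?b") (auto simp: min_def max_def intro: stack_path_sym)
    then show ?thesis
      using stack_path_bgen_outer[OF i] uv_range by (meson rtrancl_trans stack_path_sym)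
  qed
qed

section \<open>The generated monoid lies in \<open>BR n\<close>\<close>

lemma compatible_mono: "compatible n S p \<Longrightarrow> S \<subseteq> T \<Longrightarrow> compatible n T p"
  unfolding compatible_def using box_rel_mono by blast

lemma box_rel_bottom_swap:
  assumes "k \<in> S" "1 \<le> k" "k < n" "x \<in> {1..2*n}"
  shows "(x, bottom_swap n k x) \<in> box_rel n S"
  using box_rel_bottom_Suc[OF assms(1-3)] box_rel_sym box_rel_refl[OF assms(4)]
  unfolding bottom_swap_def by auto

lemma compatible_bottom_swap:
  assumes p: "fpf_involution n p" and comp: "compatible n S p" and k: "k \<in> S" "1 \<le> k" "k < n"
  shows "compatible n S (bottom_swap n k \<circ> p \<circ> bottom_swap n k)"
  unfolding compatible_def
proof
  fix x assume x: "x \<in> {1..2*n}"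
  let ?\<tau> = "bottom_swap n k"
  have \<tau>x: "?\<tau> x \<in> {1..2*n}"
    using x k unfolding bottom_swap_def by auto
  have "(x, ?\<tau> x) \<in> box_rel n S"
    by (rule box_rel_bottom_swap[OF k x])
  also have "(?\<tau> x, p (?\<tau> x)) \<in> box_rel n S"
    by (rule compatibleD[OF comp \<tau>x])
  also have "(p (?\<tau> x), ?\<tau> (p (?\<tau> x))) \<in> box_rel n S"
    by (rule box_rel_bottom_swap[OF k fpf_involutionD(1)[OF p \<tau>x]])
  finally show "(x, (?\<tau> \<circ> p \<circ> ?\<tau>) x) \<in> box_rel n S"
    by (simp add: trancl_id[OF trans_box_rel])
qed

lemma compatible_link:
  assumes p: "fpf_involution n p" and comp: "compatible n S p"
    and cd: "c \<in> {1..2*n}" "d \<in> {1..2*n}" "c \<noteq> d" "(c, d) \<in> box_rel n S"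
  shows "compatible n S (link c d p)"
  unfolding compatible_def
proof
  fix x assume x: "x \<in> {1..2*n}"
  have "(p c, p d) \<in> box_rel n S"
    using box_rel_sym[OF compatibleD[OF comp cd(1)]] cd(4) compatibleD[OF comp cd(2)] box_rel_trans
    by blast
  then show "(x, link c d p x) \<in> box_rel n S"
    using link_facts(1-4)[OF p cd(1-3)] link_facts(5)[OF p cd(1-3) x] cd(4) box_rel_sym
      compatibleD[OF comp x]
    by (cases "x \<in> {c, d, p c, p d}") auto
qed

lemma pmult_pair_blocks_gen:
  assumes p: "fpf_involution n p" and comp: "compatible n S p" and i: "i \<in> S" "1 \<le> i" "i < n"
    and g: "g \<in> {egen n i, zgen n i, dgen n i}"
  obtains q where "fpf_involution n q" "compatible n S q"
    "pmult n (blocks n (pair_rel n p)) (fst g) = blocks n (pair_rel n q)"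
proof -
  consider "g = egen n i" | "g = zgen n i" | "g = dgen n i"
    using g by blast
  then show ?thesis
  proof cases
    case 1
    show ?thesis
      by (rule that[of p]) (use 1 pmult_idp[OF p] p comp in \<open>simp_all add: egen_def\<close>)
  next
    case 2
    show ?thesis
      by (rule that[of "bottom_swap n i \<circ> p \<circ> bottom_swap n i"])
        (use 2 pmult_sgen[OF p i(2,3)] fpf_involution_bottom_swap[OF p i(2,3)]
          compatible_bottom_swap[OF p comp i] in \<open>simp_all add: zgen_def\<close>)
  next
    case 3
    have cd: "n + i \<in> {1..2*n}" "n + Suc i \<in> {1..2*n}" "n + i \<noteq> n + Suc i"
      using i by auto
    show ?thesis
      by (rule that[of "link (n + i) (n + Suc i) p"])
        (use 3 pmult_tgen[OF p i(2,3)] fpf_involution_link[OF p cd]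
          compatible_link[OF p comp cd box_rel_bottom_Suc[OF i]] in \<open>simp_all add: dgen_def\<close>)
  qed
qed

lemma BR_gens_cases:
  assumes "g \<in> BR_gens n"
  obtains i where "1 \<le> i" "i < n" "g \<in> {egen n i, zgen n i, dgen n i}"
  using assms unfolding BR_gens_def by force

lemma brmult_gen_in_BR:
  assumes x: "x \<in> BR n" and g: "g \<in> BR_gens n"
  shows "brmult n x g \<in> BR n"
proof -
  obtain p S where x_eq: "x = (blocks n (pair_rel n p), blocks n (box_rel n S))"
    and p: "fpf_involution n p" and S: "S \<subseteq> {1..<n}" and comp: "compatible n S p"
    using x unfolding BR_eq by blast
  obtain i where i: "1 \<le> i" "i < n" and g_cases: "g \<in> {egen n i, zgen n i, dgen n i}"
    using BR_gens_cases[OF g] by blast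
  let ?S = "insert i S"
  obtain q where q: "fpf_involution n q" "compatible n ?S q"
    and first: "pmult n (blocks n (pair_rel n p)) (fst g) = blocks n (pair_rel n q)"
    using pmult_pair_blocks_gen[OF p compatible_mono[OF comp subset_insertI] _ i g_cases] by blast
  have "snd g = bgen n i"
    using g_cases unfolding egen_def zgen_def dgen_def by auto
  then have "brmult n x g = (blocks n (pair_rel n q), blocks n (box_rel n ?S))"
    unfolding brmult_def x_eq using first pmult_bgen[OF i] by simp
  moreover have "?S \<subseteq> {1..<n}"
    using S i by auto
  ultimately show ?thesis
    unfolding BR_eq using q by blast
qed

lemma idp_idp_in_BR: "(idp n, idp n) \<in> BR n"
proof -
  have "compatible n {} (id_pairing n)"
    using pair_rel_subset_box_rel_iff[OF fpf_involution_id_pairing] box_rel_empty by blast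
  moreover have "(idp n, idp n) = (blocks n (pair_rel n (id_pairing n)), blocks n (box_rel n {}))"
    using idp_eq_blocks_id_pairing idp_eq_blocks_box_rel by simp
  ultimately show ?thesis
    unfolding BR_eq using fpf_involution_id_pairing by blast
qed

lemma gen_monoid_subset_BR: "gen_monoid n (BR_gens n) \<subseteq> BR n"
proof
  fix x assume "x \<in> gen_monoid n (BR_gens n)"
  then show "x \<in> BR n"
    by induction (auto intro: idp_idp_in_BR brmult_gen_in_BR)
qed

section \<open>Every element of \<open>BR n\<close> is generated\<close>

definition generated :: "nat \<Rightarrow> nat set \<Rightarrow> (nat \<Rightarrow> nat) \<Rightarrow> bool" where
  "generated n S p \<longleftrightarrow>
     (blocks n (pair_rel n p), blocks n (box_rel n S)) \<in> gen_monoid n (BR_gens n)"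

lemma gens_in_BR_gens: "1 \<le> i \<Longrightarrow> i < n \<Longrightarrow> {egen n i, zgen n i, dgen n i} \<subseteq> BR_gens n"
  unfolding BR_gens_def by auto

lemma idp_box_in_gen_monoid:
  assumes "S \<subseteq> {1..<n}"
  shows "(idp n, blocks n (box_rel n S)) \<in> gen_monoid n (BR_gens n)"
proof -
  have "finite S"
    using assms finite_subset by blast
  then show ?thesis
    using assms
  proof (induction S rule: finite_induct)
    case empty
    show ?case
      using gen_monoid.unit[of n "BR_gens n"] unfolding idp_eq_blocks_box_rel by simp
  next
    case (insert i F)
    then have i: "1 \<le> i" "i < n"
      by auto
    have "pmult n (idp n) (idp n) = idp n"
      using pmult_idp[OF fpf_involution_id_pairing] unfolding idp_eq_blocks_id_pairing .
    moreover have "brmult n (idp n, blocks n (box_rel n F)) (egen n i) \<in> gen_monoid n (BR_gens n)"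
      using gen_monoid.step insert gens_in_BR_gens[OF i] by auto
    ultimately show ?case
      unfolding brmult_def egen_def using pmult_bgen[OF i] by simp
  qed
qed

lemma generated_id_pairing: "S \<subseteq> {1..<n} \<Longrightarrow> generated n S (id_pairing n)"
  unfolding generated_def idp_eq_blocks_id_pairing[symmetric] by (rule idp_box_in_gen_monoid)

lemma generated_cong:
  "generated n S p \<Longrightarrow> (\<And>x. x \<in> {1..2*n} \<Longrightarrow> p x = q x) \<Longrightarrow> generated n S q"
  unfolding generated_def using pair_rel_cong by metis

lemma generated_step:
  assumes "generated n S p" and k: "k \<in> S" "1 \<le> k" "k < n"
    and g: "g \<in> {egen n k, zgen n k, dgen n k}"
    and first: "pmult n (blocks n (pair_rel n p)) (fst g) = blocks n (pair_rel n q)"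
  shows "generated n S q"
proof -
  have "brmult n (blocks n (pair_rel n p), blocks n (box_rel n S)) g \<in> gen_monoid n (BR_gens n)"
    using gen_monoid.step assms(1) g gens_in_BR_gens[OF k(2,3)] unfolding generated_def by blast
  moreover have "snd g = bgen n k"
    using g unfolding egen_def zgen_def dgen_def by auto
  ultimately show ?thesis
    unfolding generated_def brmult_def using first pmult_bgen[OF k(2,3)] insert_absorb[OF k(1)]
    by simp
qed

lemma generated_of_bottom_swap:
  assumes "generated n S (bottom_swap n k \<circ> p \<circ> bottom_swap n k)" and p: "fpf_involution n p"
    and k: "k \<in> S" "1 \<le> k" "k < n"
  shows "generated n S p"
proof (rule generated_step[OF assms(1) k, of "zgen n k"])
  show "pmult n (blocks n (pair_rel n (bottom_swap n k \<circ> p \<circ> bottom_swap n k))) (fst (zgen n k))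
      = blocks n (pair_rel n p)"
    using pmult_sgen[OF fpf_involution_bottom_swap[OF p k(2,3)] k(2,3)]
    unfolding zgen_def by (simp add: comp_def)
qed simp

lemma generated_link:
  assumes "generated n S p" and p: "fpf_involution n p" and k: "k \<in> S" "1 \<le> k" "k < n"
  shows "generated n S (link (n + k) (n + Suc k) p)"
  by (rule generated_step[OF assms(1) k, of "dgen n k"]) (use pmult_tgen[OF p k(2,3)] in \<open>simp_all add: dgen_def\<close>)

definition bottom_pairs :: "nat \<Rightarrow> (nat \<Rightarrow> nat) \<Rightarrow> nat set" where
  "bottom_pairs n p = {x \<in> {n+1..2*n}. n < p x}"

lemma finite_bottom_pairs: "finite (bottom_pairs n p)"
  unfolding bottom_pairs_def by simp

lemma no_bottom_pairsD:
  assumes "bottom_pairs n p = {}" "j \<in> {1..n}"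
  shows "p (n + j) \<le> n"
proof -
  have "n + j \<in> {n+1..2*n}"
    using assms(2) by auto
  then show ?thesis
    using assms(1) unfolding bottom_pairs_def by (simp add: not_less)
qed

lemma card_bottom_pairs_bottom_swap:
  assumes k: "1 \<le> k" "k < n"
  shows "card (bottom_pairs n (bottom_swap n k \<circ> p \<circ> bottom_swap n k)) = card (bottom_pairs n p)"
proof -
  let ?\<tau> = "bottom_swap n k"
  have \<tau>: "?\<tau> x \<in> {n+1..2*n} \<longleftrightarrow> x \<in> {n+1..2*n}" "n < ?\<tau> x \<longleftrightarrow> n < x" for x
    using k unfolding bottom_swap_def by auto
  have "bottom_pairs n (?\<tau> \<circ> p \<circ> ?\<tau>) = ?\<tau> ` bottom_pairs n p"
  proof (rule set_eqI)
    fix x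
    have "x \<in> bottom_pairs n (?\<tau> \<circ> p \<circ> ?\<tau>) \<longleftrightarrow> ?\<tau> x \<in> bottom_pairs n p"
      unfolding bottom_pairs_def comp_def mem_Collect_eq \<tau>(2) using \<tau>(1)[of x] by blast
    then show "x \<in> bottom_pairs n (?\<tau> \<circ> p \<circ> ?\<tau>) \<longleftrightarrow> x \<in> ?\<tau> ` bottom_pairs n p"
      by (metis bottom_swap_involutive image_iff)
  qed
  moreover have "inj (bottom_swap n k)"
    by (metis bottom_swap_involutive injI)
  ultimately show ?thesis
    by (simp add: card_image inj_on_subset)
qed

lemma fpf_involution_onto:
  assumes p: "fpf_involution n p" and X: "X \<subseteq> {1..2*n}" and "finite Y"
    and maps: "p ` X \<subseteq> Y" and card: "card Y \<le> card X" and y: "y \<in> Y"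
  shows "p y \<in> X"
proof -
  have "inj_on p X"
    using fpf_involution_inj[OF p] X unfolding inj_on_def by blast
  then have "card (p ` X) = card Y"
    using card_image card card_mono[OF \<open>finite Y\<close> maps] by fastforce
  then have "p ` X = Y"
    using card_subset_eq[OF \<open>finite Y\<close> maps] by simp
  then obtain x where "x \<in> X" "y = p x"
    using y by blast
  then show ?thesis
    using fpf_involutionD(3)[OF p] X by auto
qed

lemma tops_paired_with_bottoms:
  assumes p: "fpf_involution n p" and no: "bottom_pairs n p = {}" and a: "a \<in> {1..n}"
  shows "n < p a"
proof -
  have maps: "p ` {n+1..2*n} \<subseteq> {1..n}"
    using no fpf_involutionD(1)[OF p] unfolding bottom_pairs_def by fastforce
  have "p a \<in> {n+1..2*n}"
    by (rule fpf_involution_onto[OF p _ _ maps _ a]) auto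
  then show ?thesis
    by simp
qed

lemma exists_Suc_descent:
  fixes f :: "nat \<Rightarrow> 'a::linorder"
  assumes "j \<le> j'" and "f j' < f j"
  shows "\<exists>k\<in>{j..<j'}. f (Suc k) < f k"
proof (rule ccontr)
  assume "\<not> ?thesis"
  then have "f j \<le> f j'"
    using lift_Suc_mono_le_ivl[of "{j..<j'}" f j j'] assms(1) by (auto simp: not_less)
  then show False
    using assms(2) by simp
qed

lemma exists_bottom_descent:
  assumes p: "fpf_involution n p" and comp: "compatible n S p" and no: "bottom_pairs n p = {}"
    and moved: "\<exists>j\<in>{1..n}. p (n + j) \<noteq> j"
  shows "\<exists>k\<in>S. 1 \<le> k \<and> k < n \<and> p (n + Suc k) < p (n + k)"
proof -
  have top: "p (n + i) \<in> {1..n}" if "i \<in> {1..n}" for i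
    using fpf_involutionD(1)[OF p, of "n + i"] no_bottom_pairsD[OF no that] that by auto
  obtain j where j: "j \<in> {1..n}" "p (n + j) \<noteq> j"
    and least: "\<And>i. i \<in> {1..n} \<Longrightarrow> i < j \<Longrightarrow> p (n + i) = i"
    using moved exists_least_iff[of "\<lambda>j. j \<in> {1..n} \<and> p (n + j) \<noteq> j"] by blast
  have "j < p (n + j)"
  proof (rule ccontr)
    assume "\<not> j < p (n + j)"
    then have "p (n + p (n + j)) = p (n + j)"
      using least top[OF j(1)] j(2) by simp
    moreover have "n + p (n + j) \<in> {1..2*n}" "n + j \<in> {1..2*n}"
      using top[OF j(1)] j(1) by auto
    ultimately have "n + p (n + j) = n + j"
      using fpf_involution_inj[OF p] by blast
    then show False
      using j(2) by simp
  qed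
  obtain j' where j': "j' \<in> {1..n}" "p j = n + j'"
    using tops_paired_with_bottoms[OF p no j(1)] fpf_involutionD(1)[OF p, of j] j(1)
    by (intro that[of "p j - n"]) auto
  have pj': "p (n + j') = j"
    using fpf_involutionD(3)[OF p, of j] j(1) j'(2) by auto
  then have "j < j'"
    using least[OF j'(1)] j(2) by (cases j' j rule: linorder_cases) auto
  have "(j, n + j') \<in> box_rel n S"
    using compatibleD[OF comp, of j] j(1) j'(2) by auto
  then have "{j..<j'} \<subseteq> S"
    using j(1) j'(1) \<open>j < j'\<close> unfolding box_rel_def by auto
  moreover obtain k where "k \<in> {j..<j'}" "p (n + Suc k) < p (n + k)"
    using exists_Suc_descent[of j j' "\<lambda>k. p (n + k)"] \<open>j < j'\<close> \<open>j < p (n + j)\<close> pj' by auto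
  ultimately show ?thesis
    using j(1) j'(1) by (intro bexI[of _ k]) auto
qed

definition displacement :: "nat \<Rightarrow> (nat \<Rightarrow> nat) \<Rightarrow> nat" where
  "displacement n p = nat (\<Sum>j=1..n. (int (p (n + j)) - int j)\<^sup>2)"

lemma displacement_bottom_swap_less:
  assumes tops: "\<And>j. j \<in> {1..n} \<Longrightarrow> p (n + j) \<le> n" and k: "1 \<le> k" "k < n"
    and desc: "p (n + Suc k) < p (n + k)"
  shows "displacement n (bottom_swap n k \<circ> p \<circ> bottom_swap n k) < displacement n p"
proof -
  let ?q = "bottom_swap n k \<circ> p \<circ> bottom_swap n k"
  define g where "g q j = (int (q (n + j)) - int j)\<^sup>2" for q :: "nat \<Rightarrow> nat" and j
  have split: "sum (g q) {1..n} = g q k + g q (Suc k) + sum (g q) ({1..n} - {k, Suc k})" for q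
    using sum.subset_diff[of "{k, Suc k}" "{1..n}" "g q"] k by simp
  have "sum (g ?q) ({1..n} - {k, Suc k}) = sum (g p) ({1..n} - {k, Suc k})"
  proof (rule sum.cong)
    fix j assume "j \<in> {1..n} - {k, Suc k}"
    then show "g ?q j = g p j"
      using tops[of j] k unfolding g_def bottom_swap_def by auto
  qed simp
  moreover have "?q (n + k) = p (n + Suc k)" "?q (n + Suc k) = p (n + k)"
    using tops[of k] tops[of "Suc k"] k unfolding bottom_swap_def by auto
  then have "g p k + g p (Suc k) - (g ?q k + g ?q (Suc k)) = 2 * (int (p (n + k)) - int (p (n + Suc k)))"
    unfolding g_def by (simp add: power2_eq_square algebra_simps)
  ultimately have "sum (g ?q) {1..n} < sum (g p) {1..n}"
    using split[of p] split[of ?q] desc by simp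
  moreover have "0 \<le> sum (g ?q) {1..n}"
    unfolding g_def by (simp add: sum_nonneg)
  ultimately show ?thesis
    unfolding displacement_def g_def by simp
qed

lemma eq_id_pairing_if_bottoms_fixed:
  assumes p: "fpf_involution n p" and fixed: "\<forall>j\<in>{1..n}. p (n + j) = j" and x: "x \<in> {1..2*n}"
  shows "p x = id_pairing n x"
proof (cases "x \<le> n")
  case True
  then have "p (p (n + x)) = p x"
    using fixed x by simp
  then show ?thesis
    using fpf_involutionD(3)[OF p, of "n + x"] True x unfolding id_pairing_def by simp
next
  case False
  then have "x - n \<in> {1..n}"
    using x by auto
  then have "p (n + (x - n)) = x - n"
    using fixed by blast
  then show ?thesis
    using False unfolding id_pairing_def by simp
qed

lemma generated_if_no_bottom_pairs:
  assumes S: "S \<subseteq> {1..<n}"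
  shows "fpf_involution n p \<Longrightarrow> compatible n S p \<Longrightarrow> bottom_pairs n p = {} \<Longrightarrow> generated n S p"
proof (induction "displacement n p" arbitrary: p rule: less_induct)
  case less
  note p = less.prems(1) and comp = less.prems(2) and no = less.prems(3)
  show ?case
  proof (cases "\<forall>j\<in>{1..n}. p (n + j) = j")
    case True
    then show ?thesis
      using generated_cong[OF generated_id_pairing[OF S]] eq_id_pairing_if_bottoms_fixed[OF p]
      by metis
  next
    case False
    then obtain k where k: "k \<in> S" "1 \<le> k" "k < n" "p (n + Suc k) < p (n + k)"
      using exists_bottom_descent[OF p comp no] by blast
    let ?q = "bottom_swap n k \<circ> p \<circ> bottom_swap n k"
    have "generated n S ?q"
    proof (rule less.hyps)
      show "displacement n ?q < displacement n p"
        by (rule displacement_bottom_swap_less[OF no_bottom_pairsD[OF no] k(2-4)])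
      show "fpf_involution n ?q"
        by (rule fpf_involution_bottom_swap[OF p k(2,3)])
      show "compatible n S ?q"
        by (rule compatible_bottom_swap[OF p comp k(1-3)])
      show "bottom_pairs n ?q = {}"
        using card_bottom_pairs_bottom_swap[OF k(2,3), of p] no finite_bottom_pairs by simp
    qed
    then show ?thesis
      by (rule generated_of_bottom_swap[OF _ p k(1-3)])
  qed
qed

lemma compatible_bottom_pairD:
  assumes comp: "compatible n S p" and "1 \<le> c" "c \<le> e" "e \<le> n" "p (n + c) = n + e"
  shows "{c..<e} \<subseteq> S"
proof -
  have "(n + c, n + e) \<in> box_rel n S"
    using compatibleD[OF comp, of "n + c"] assms(2-5) by auto
  then show ?thesis
    using box_rel_bottomD assms(2,3) by blast
qed

lemma box_bottoms_eq_image_tops: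
  "box_rel n S `` {z} \<inter> {n+1..2*n} = (\<lambda>j. n + j) ` (box_rel n S `` {z} \<inter> {1..n})"
proof (intro equalityI subsetI)
  fix y assume y: "y \<in> box_rel n S `` {z} \<inter> {n+1..2*n}"
  then have "(y, y - n) \<in> box_rel n S"
    using box_rel_column[of y n S] by (simp add: column_def)
  then have "(z, y - n) \<in> box_rel n S"
    using y box_rel_trans by blast
  moreover have "y = n + (y - n)" "y - n \<in> {1..n}"
    using y by auto
  ultimately show "y \<in> (\<lambda>j. n + j) ` (box_rel n S `` {z} \<inter> {1..n})"
    by blast
next
  fix y assume "y \<in> (\<lambda>j. n + j) ` (box_rel n S `` {z} \<inter> {1..n})"
  then obtain j where j: "(z, j) \<in> box_rel n S" "j \<in> {1..n}" "y = n + j"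
    by blast
  then have "(z, n + j) \<in> box_rel n S"
    using box_rel_sym[OF box_rel_column[of "n + j" n S]] box_rel_trans by auto
  then show "y \<in> box_rel n S `` {z} \<inter> {n+1..2*n}"
    using j by auto
qed

text \<open>The top and the bottom row of a block of a boxed partition have the same size, so a block
  containing a pair of bottom points also contains a pair of top points.\<close>

lemma top_pair_in_box:
  assumes p: "fpf_involution n p" and comp: "compatible n S p"
    and c: "1 \<le> c" "c < n" and pc: "p (n + c) = n + Suc c"
  shows "\<exists>a\<in>{1..n}. p a \<in> {1..n} \<and> (a, n + c) \<in> box_rel n S"
proof (rule ccontr)
  assume none: "\<not> ?thesis"
  let ?B = "box_rel n S `` {n + c}"
  let ?T = "?B \<inter> {1..n}" and ?Bot = "?B \<inter> {n+1..2*n}"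
  have card: "card ?Bot \<le> card ?T"
    unfolding box_bottoms_eq_image_tops by (simp add: card_image)
  have maps: "p ` ?T \<subseteq> ?Bot"
  proof
    fix y assume "y \<in> p ` ?T"
    then obtain a where a: "a \<in> ?T" "y = p a"
      by blast
    then have "(n + c, a) \<in> box_rel n S" "a \<in> {1..2*n}"
      by auto
    moreover have "p a \<notin> {1..n}"
      using none a box_rel_sym by blast
    ultimately show "y \<in> ?Bot"
      using a(2) fpf_involutionD(1)[OF p] compatibleD[OF comp] box_rel_trans by force
  qed
  have "n + c \<in> ?Bot"
    using box_rel_refl[of "n + c" n S] c by auto
  then have "p (n + c) \<in> ?T"
    by (rule fpf_involution_onto[OF p _ _ maps card, rotated 2]) auto
  then show False
    using pc by simp
qed

lemma card_bottom_pairs_link_less: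
  assumes p: "fpf_involution n p" and a: "a \<in> {1..n}" "p a \<in> {1..n}"
    and C: "C \<in> bottom_pairs n p"
  shows "card (bottom_pairs n (link a C p)) < card (bottom_pairs n p)"
proof -
  have aC: "a \<in> {1..2*n}" "C \<in> {1..2*n}" "a \<noteq> C" and "n < C" "n < p C"
    using a C unfolding bottom_pairs_def by auto
  note q = link_facts[OF p aC]
  have "bottom_pairs n (link a C p) \<subseteq> bottom_pairs n p - {C}"
  proof
    fix x assume x: "x \<in> bottom_pairs n (link a C p)"
    then have "x \<notin> {a, C, p a, p C}"
      using a q(2,4) unfolding bottom_pairs_def by auto
    then show "x \<in> bottom_pairs n p - {C}"
      using x q(5) unfolding bottom_pairs_def by auto
  qed
  then have "bottom_pairs n (link a C p) \<subset> bottom_pairs n p"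
    using C by blast
  then show ?thesis
    by (rule psubset_card_mono[OF finite_bottom_pairs])
qed

lemma link_link:
  assumes p: "fpf_involution n p" and ac: "a \<in> {1..2*n}" "c \<in> {1..2*n}" "a \<noteq> c" "a \<noteq> p c"
    and x: "x \<in> {1..2*n}"
  shows "link c (p c) (link a c p) x = p x"
proof -
  note pa = fpf_involutionD[OF p ac(1)] and pc = fpf_involutionD[OF p ac(2)]
  note q = link_facts[OF p ac(1-3)]
  have pa_ne: "p a \<noteq> c" "p a \<noteq> p c"
    using ac(3,4) pa(3) pc(3) by metis+
  consider "x = c" | "x = p c" | "x = a" | "x = p a" | "x \<notin> {a, c, p a, p c}"
    by blast
  then show ?thesis
  proof cases
    case 5
    then have "link a c p x = p x"
      using q(5)[OF x] by simp
    moreover have "p x \<noteq> c" "p x \<noteq> p c"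
      using 5 pc(3) fpf_involutionD(3)[OF p x] by auto
    ultimately show ?thesis
      using 5 unfolding link_def by simp
  qed (use q(1-4) pc(2,3) pa(3) pa_ne ac(3,4) in \<open>simp_all add: link_def\<close>)
qed

text \<open>If the bottom points \<open>C = n + c\<close> and \<open>n + c + 1\<close> are paired and \<open>{a, p a}\<close> is a pair of
  top points in the same box, then \<open>p\<close> is \<open>q d\<^sub>c\<close> with \<open>q\<close> pairing \<open>a\<close> with \<open>C\<close> and
  \<open>p a\<close> with \<open>n + c + 1\<close>.\<close>

lemma generated_adjacent_bottom_pair:
  assumes fewer: "\<And>q. fpf_involution n q \<Longrightarrow> compatible n S q \<Longrightarrow>
      card (bottom_pairs n q) < card (bottom_pairs n p) \<Longrightarrow> generated n S q"
    and p: "fpf_involution n p" and comp: "compatible n S p"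
    and c: "1 \<le> c" "c < n" and pc: "p (n + c) = n + Suc c"
  shows "generated n S p"
proof -
  obtain a where a: "a \<in> {1..n}" "p a \<in> {1..n}" "(a, n + c) \<in> box_rel n S"
    using top_pair_in_box[OF p comp c pc] by blast
  define C where "C = n + c"
  let ?q = "link a C p"
  have aC: "a \<in> {1..2*n}" "C \<in> {1..2*n}" "a \<noteq> C" "a \<noteq> p C"
    using a c pc unfolding C_def by auto
  have q: "fpf_involution n ?q"
    by (rule fpf_involution_link[OF p aC(1-3)])
  have "C \<in> bottom_pairs n p"
    using c pc unfolding bottom_pairs_def C_def by auto
  then have "card (bottom_pairs n ?q) < card (bottom_pairs n p)"
    by (rule card_bottom_pairs_link_less[OF p a(1,2)])
  moreover have "compatible n S ?q"
    by (rule compatible_link[OF p comp aC(1-3)]) (use a(3) in \<open>simp add: C_def\<close>)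
  ultimately have "generated n S ?q"
    using fewer q by blast
  moreover have "c \<in> S"
    using compatible_bottom_pairD[OF comp c(1) _ _ pc] c by auto
  ultimately have "generated n S (link C (p C) ?q)"
    using generated_link[OF _ q _ c] pc unfolding C_def by simp
  then show ?thesis
    using generated_cong link_link[OF p aC] by metis
qed

lemma generated_bottom_pair:
  assumes fewer: "\<And>q. fpf_involution n q \<Longrightarrow> compatible n S q \<Longrightarrow>
      card (bottom_pairs n q) < h \<Longrightarrow> generated n S q"
  shows "fpf_involution n p \<Longrightarrow> compatible n S p \<Longrightarrow> card (bottom_pairs n p) = h \<Longrightarrow>
    1 \<le> c \<Longrightarrow> c < e \<Longrightarrow> e \<le> n \<Longrightarrow> p (n + c) = n + e \<Longrightarrow> generated n S p"
proof (induction e arbitrary: p rule: less_induct)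
  case (less e)
  note p = less.prems(1) and comp = less.prems(2) and c = less.prems(4-6) and pc = less.prems(7)
  show ?case
  proof (cases "e = Suc c")
    case True
    then show ?thesis
      using generated_adjacent_bottom_pair fewer less.prems by auto
  next
    case False
    define k where "k = e - 1"
    have k: "1 \<le> k" "k < n" "c < k" "e = Suc k"
      using c False unfolding k_def by auto
    let ?q = "bottom_swap n k \<circ> p \<circ> bottom_swap n k"
    have "k \<in> S"
      using compatible_bottom_pairD[OF comp c(1) _ c(3) pc] c k by auto
    have qc: "?q (n + c) = n + k"
      using pc k unfolding bottom_swap_def by auto
    have "card (bottom_pairs n ?q) = h"
      using card_bottom_pairs_bottom_swap[OF k(1,2)] less.prems(3) by simp
    then have "generated n S ?q"
      using less.IH[OF _ fpf_involution_bottom_swap[OF p k(1,2)]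
          compatible_bottom_swap[OF p comp \<open>k \<in> S\<close> k(1,2)] _ c(1) _ _ qc] k c
      by (simp add: comp_def)
    then show ?thesis
      by (rule generated_of_bottom_swap[OF _ p \<open>k \<in> S\<close> k(1,2)])
  qed
qed

lemma generated_if_compatible:
  assumes S: "S \<subseteq> {1..<n}"
  shows "fpf_involution n p \<Longrightarrow> compatible n S p \<Longrightarrow> generated n S p"
proof (induction "card (bottom_pairs n p)" arbitrary: p rule: less_induct)
  case less
  note p = less.prems(1) and comp = less.prems(2)
  show ?case
  proof (cases "bottom_pairs n p = {}")
    case True
    then show ?thesis
      using generated_if_no_bottom_pairs[OF S p comp] by blast
  next
    case False
    then obtain x where x: "x \<in> {n+1..2*n}" "n < p x"
      unfolding bottom_pairs_def by blast
    then have px: "p x \<in> {n+1..2*n}" "p x \<noteq> x" "p (p x) = x"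
      using fpf_involutionD[OF p, of x] by auto
    define c where "c = min x (p x) - n"
    define e where "e = max x (p x) - n"
    have "1 \<le> c" "c < e" "e \<le> n" "p (n + c) = n + e"
      using x px unfolding c_def e_def by (auto simp: min_def max_def)
    then show ?thesis
      using generated_bottom_pair[OF less.hyps] p comp by blast
  qed
qed

theorem proposition6p10:
  fixes n :: nat
  shows "gen_monoid n (BR_gens n) = BR n"
proof
  show "gen_monoid n (BR_gens n) \<subseteq> BR n"
    by (rule gen_monoid_subset_BR)
  show "BR n \<subseteq> gen_monoid n (BR_gens n)"
  proof
    fix x assume "x \<in> BR n"
    then obtain p S where x: "x = (blocks n (pair_rel n p), blocks n (box_rel n S))"
      and "fpf_involution n p" "S \<subseteq> {1..<n}" "compatible n S p"
      unfolding BR_eq by blast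
    then have "generated n S p"
      using generated_if_compatible by blast
    then show "x \<in> gen_monoid n (BR_gens n)"
      unfolding generated_def x .
  qed
qed

end
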